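(* Let $\theta=q/r$ with $q,r$ coprime positive integers and let $(U,V)$ be an irreducible finite-dimensional unitary representation of $\mathcal A_\theta$ on $\mathcal H$. Then every irreducible finite-dimensional representation of $\mathcal A_\theta$ is unitarily equivalent to $(sU,tV)$ for some $s,t\in S^1$ (so the irreducible representations are indexed by points of a 2-torus), and all the bundles $\mathcal E_\pi$ associated with irreducible finite-dimensional representations $\pi$ of $\mathcal A_\theta$ are isomorphic as topological complex vector bundles over $\mathbb C/\Lambda$.
   Context: Let $\tau\in\mathbb C$ with $\mathrm{Im}\,\tau>0$, $\Lambda=\mathbb Z+\tau\mathbb Z$, $\theta>0$, $\alpha:=\pi\theta/\mathrm{Im}\,\tau$. $\mathcal A_\theta$ is the noncommutative torus generated by unitaries $u,v$ with $vu=e^{2\pi i\theta}uv$. For a representation $\pi$ of $\mathcal A_\theta$ on a finite-dimensional Hilbert space $\mathcal H_\pi$ and $\gamma=n+\tau m\in\Lambda$, set $J^\pi_\gamma(z)=\exp(\alpha(z\bar\gamma+\frac12|\gamma|^2))e^{\pi i\theta nm}\pi(u)^{-n}\pi(v)^{-m}$; $\mathcal E_\pi\to\mathbb C/\Lambda$ is the holomorphic vector bundle whose smooth (resp. holomorphic) sections are smooth (resp. holomorphic) maps $s:\mathbb C\to\mathcal H_\pi$ with $s(z+\gamma)=J^\pi_\gamma(z)s(z)$ for all $\gamma\in\Lambda$. *)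

theory Defs
  imports "HOL-Analysis.Analysis"
begin

text \<open>Finite-dimensional Hilbert spaces are modelled as complex^'n (standard inner product);
linear maps as matrices complex^'n^'m (mapping complex^'n to complex^'m via *v).\<close>

definition cadj :: "complex^'n^'m \<Rightarrow> complex^'m^'n" where
  "cadj A = (\<chi> i j. cnj (A $ j $ i))"

definition cscale :: "complex \<Rightarrow> complex^'n^'m \<Rightarrow> complex^'n^'m" where
  "cscale c A = (\<chi> i j. c * A $ i $ j)"

definition unitary_map :: "complex^'n^'m \<Rightarrow> bool" where
  "unitary_map W \<longleftrightarrow> W ** cadj W = mat 1 \<and> cadj W ** W = mat 1"

primrec mpow :: "complex^'n^'n \<Rightarrow> nat \<Rightarrow> complex^'n^'n" where
  "mpow A 0 = mat 1"
| "mpow A (Suc k) = A ** mpow A k"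

definition mpow_int :: "complex^'n^'n \<Rightarrow> int \<Rightarrow> complex^'n^'n" where
  "mpow_int A k = (if 0 \<le> k then mpow A (nat k) else mpow (matrix_inv A) (nat (- k)))"

text \<open>A (unital *-)representation of the noncommutative torus A_theta on complex^'n:
unitaries pi(u)=U, pi(v)=V with V U = e^(2 pi i theta) U V.\<close>
definition is_rep :: "real \<Rightarrow> complex^'n^'n \<Rightarrow> complex^'n^'n \<Rightarrow> bool" where
  "is_rep \<theta> U V \<longleftrightarrow> unitary_map U \<and> unitary_map V \<and>
     V ** U = cscale (exp (2 * pi * \<i> * of_real \<theta>)) (U ** V)"

definition csubspace :: "(complex^'n) set \<Rightarrow> bool" where
  "csubspace S \<longleftrightarrow> 0 \<in> S \<and> (\<forall>x\<in>S. \<forall>y\<in>S. x + y \<in> S) \<and> (\<forall>c::complex. \<forall>x\<in>S. c *s x \<in> S)"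

definition irreducible_rep :: "real \<Rightarrow> complex^'n^'n \<Rightarrow> complex^'n^'n \<Rightarrow> bool" where
  "irreducible_rep \<theta> U V \<longleftrightarrow> is_rep \<theta> U V \<and>
     (\<forall>S. csubspace S \<and> (\<forall>x\<in>S. U *v x \<in> S \<and> V *v x \<in> S) \<longrightarrow> S = {0} \<or> S = UNIV)"

definition unit_equiv :: "complex^'n^'n \<Rightarrow> complex^'n^'n \<Rightarrow> complex^'m^'m \<Rightarrow> complex^'m^'m \<Rightarrow> bool" where
  "unit_equiv U V U' V' \<longleftrightarrow> (\<exists>W :: complex^'n^'m. unitary_map W \<and>
      U' = W ** U ** cadj W \<and> V' = W ** V ** cadj W)"

definition Jfac :: "real \<Rightarrow> complex \<Rightarrow> complex^'n^'n \<Rightarrow> complex^'n^'n \<Rightarrow> int \<Rightarrow> int \<Rightarrow> complex \<Rightarrow> complex^'n^'n" where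
  "Jfac \<theta> \<tau> U V n m z =
     (let \<gamma> = of_int n + \<tau> * of_int m; \<alpha> = pi * \<theta> / Im \<tau> in
      cscale (exp (of_real \<alpha> * (z * cnj \<gamma> + of_real ((cmod \<gamma>)\<^sup>2 / 2)))
              * exp (of_real (pi * \<theta>) * \<i> * of_int n * of_int m))
             (mpow_int U (- n) ** mpow_int V (- m)))"

text \<open>Isomorphism of the topological complex vector bundles E_pi, E_pi' over C/Lambda defined by
the factors of automorphy: a continuous family of invertible linear maps Phi(z): H_pi \<rightarrow> H_pi'
intertwining the factors, Phi(z+gamma) J^pi_gamma(z) = J^pi'_gamma(z) Phi(z).\<close>
definition bundle_iso :: "real \<Rightarrow> complex \<Rightarrow> complex^'n^'n \<Rightarrow> complex^'n^'n \<Rightarrow> complex^'m^'m \<Rightarrow> complex^'m^'m \<Rightarrow> bool" where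
  "bundle_iso \<theta> \<tau> U V U' V' \<longleftrightarrow> (\<exists>\<Phi> :: complex \<Rightarrow> complex^'n^'m.
     continuous_on UNIV \<Phi> \<and> (\<forall>z. invertible (\<Phi> z)) \<and>
     (\<forall>n m z. \<Phi> (z + of_int n + \<tau> * of_int m) ** Jfac \<theta> \<tau> U V n m z
              = Jfac \<theta> \<tau> U' V' n m z ** \<Phi> z))"

end

theory Submission
  imports Defs "Jordan_Normal_Form.Spectral_Radius"
begin

text \<open>
  Let \<open>\<omega> = exp (2\<pi>i\<theta>)\<close>, a primitive \<open>r\<close>-th root of unity. In an irreducible representation,
  \<open>V^r\<close> commutes with \<open>U\<close> and \<open>V\<close>, so it is a scalar \<open>b\<close> by Schur's lemma. If \<open>x\<close> is a unit
  eigenvector of \<open>U\<close> with eigenvalue \<open>\<kappa>\<close>, then \<open>V^j x\<close> is an eigenvector with eigenvalue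
  \<open>\<kappa> \<omega>^-j\<close>. These eigenvalues are distinct for \<open>j < r\<close>, so the vectors \<open>V^j x\<close> are
  orthonormal; they span an invariant subspace, hence the whole space. So \<open>U\<close> acts as a clock
  and \<open>V\<close> as a shift with \<open>V^r = b\<close>, and the representation is determined by \<open>(\<kappa>, b)\<close> up to
  unitary equivalence. Passing from \<open>(U, V)\<close> to \<open>(sU, tV)\<close> changes \<open>(\<kappa>, b)\<close> into
  \<open>(s\<kappa>, t^r b)\<close>, which reaches every pair of unimodular numbers.

  Such a twist does not change the topological bundle: writing \<open>z = X + \<tau>Y\<close> with real
  \<open>X, Y\<close>, and \<open>s = exp (ia)\<close>, \<open>t = exp (ic)\<close>, the continuous gauge \<open>exp (-i(aX + cY))\<close>
  picks up exactly the factor \<open>s^-n t^-m\<close> under \<open>z \<mapsto> z + n + \<tau>m\<close>.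
\<close>

lemma matrix_eigenvector_exists:
  fixes A :: "complex^'n^'n"
  obtains c x where "x \<noteq> 0" "A *v x = c *s x"
proof -
  define n where "n = CARD('n)"
  have n0: "n > 0" unfolding n_def by simp
  obtain f where f: "bij_betw f {0..<n} (UNIV::'n set)"
    using ex_bij_betw_nat_finite[of "UNIV::'n set"] unfolding n_def by auto
  define B where "B = Matrix.mat n n (\<lambda>(i,j). A $ f i $ f j)"
  have B: "B \<in> carrier_mat n n" unfolding B_def by simp
  from spectrum_non_empty[OF B n0] obtain c where "eigenvalue B c" unfolding spectrum_def by auto
  then obtain v where "eigenvector B v c" unfolding eigenvalue_def by auto
  hence vc: "v \<in> carrier_vec n" and v0: "v \<noteq> 0\<^sub>v n" and Bv: "B *\<^sub>v v = c \<cdot>\<^sub>v v"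
    unfolding eigenvector_def using B by auto
  define g where "g = inv_into {0..<n} f"
  have gf: "g (f i) = i" if "i < n" for i
    unfolding g_def using f that by (simp add: bij_betw_def inv_into_f_f)
  have fg: "f (g j) = j" for j
    unfolding g_def using f by (meson UNIV_I bij_betw_inv_into_right)
  have gn: "g j < n" for j
    unfolding g_def using f by (metis UNIV_I atLeastLessThan_iff bij_betw_def inv_into_into)
  define x :: "complex^'n" where "x = (\<chi> j. Matrix.vec_index v (g j))"
  have "x \<noteq> 0"
  proof
    assume "x = 0"
    hence "Matrix.vec_index v i = 0" if "i < n" for i
      using that gf[OF that] unfolding x_def by (metis vec_lambda_beta zero_index)
    hence "v = 0\<^sub>v n" using vc by (intro eq_vecI) auto
    with v0 show False by simp
  qed
  moreover have "A *v x = c *s x"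
    unfolding Finite_Cartesian_Product.vec_eq_iff
  proof
    fix j :: 'n
    have "(A *v x) $ j = (\<Sum>i\<in>{0..<n}. A $ j $ f i * x $ f i)"
      using sum.reindex_bij_betw[OF f, of "\<lambda>l. A $ j $ l * x $ l"]
      by (simp add: matrix_vector_mult_def)
    also have "\<dots> = (\<Sum>i\<in>{0..<n}. A $ f (g j) $ f i * Matrix.vec_index v i)"
      by (rule sum.cong) (auto simp: x_def gf fg)
    also have "\<dots> = Matrix.vec_index (B *\<^sub>v v) (g j)"
      using gn vc B by (simp add: B_def scalar_prod_def row_def)
    also have "\<dots> = c * x $ j" using Bv gn vc by (simp add: x_def)
    finally show "(A *v x) $ j = (c *s x) $ j" by simp
  qed
  ultimately show ?thesis by (rule that)
qed

hide_const (open) Matrix.mat Matrix.vec Matrix.row Matrix.col Determinant.det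

text \<open>The theory Matrix of Jordan_Normal_Form shadows this fact name.\<close>
lemmas cvec_eq_iff = Finite_Cartesian_Product.vec_eq_iff

section \<open>Matrices over the complex numbers\<close>

lemma unimodular_mult_cnj: "cmod c = 1 \<Longrightarrow> c * cnj c = 1"
  by (metis complex_norm_square of_real_1 power_one)

lemma unimodular_cnj_mult: "cmod c = 1 \<Longrightarrow> cnj c * c = 1"
  using unimodular_mult_cnj[of c] by (simp add: mult.commute)

lemma matrix_vector_mult_sum:
  "finite S \<Longrightarrow> (A::complex^'n^'m) *v (\<Sum>j\<in>S. f j) = (\<Sum>j\<in>S. A *v f j)"
  by (induction S rule: finite_induct) (auto simp: matrix_vector_right_distrib)

lemma vector_smult_sum: "(a::complex) *s (\<Sum>j\<in>S. f j) = (\<Sum>j\<in>S. a *s f j)"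
  by (simp add: cvec_eq_iff sum_component sum_distrib_left)

lemma cscale_mult_vec: "cscale c A *v x = c *s (A *v x)"
  by (simp add: cscale_def matrix_vector_mult_def cvec_eq_iff sum_distrib_left mult.assoc)

lemma cscale_mult_left: "cscale c A ** B = cscale c (A ** B)"
  by (simp add: cscale_def matrix_matrix_mult_def cvec_eq_iff sum_distrib_left mult.assoc)

lemma cscale_mult_right: "A ** cscale c B = cscale c (A ** B)"
  by (simp add: cscale_def matrix_matrix_mult_def cvec_eq_iff sum_distrib_left algebra_simps)

lemma cscale_cscale: "cscale c (cscale d A) = cscale (c * d) A"
  by (simp add: cscale_def cvec_eq_iff)

lemma cscale_one: "cscale 1 A = A"
  by (simp add: cscale_def cvec_eq_iff)

lemmas cscale_simps = cscale_mult_left cscale_mult_right cscale_cscale cscale_one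

lemma cadj_cadj: "cadj (cadj A) = A"
  by (simp add: cadj_def cvec_eq_iff)

lemma cadj_mult: "cadj (A ** B) = cadj B ** cadj A"
  by (simp add: cadj_def matrix_matrix_mult_def cvec_eq_iff mult.commute)

lemma cadj_cscale: "cadj (cscale c A) = cscale (cnj c) (cadj A)"
  by (simp add: cadj_def cscale_def cvec_eq_iff)

lemma mpow_Suc_right: "mpow A (Suc k) = mpow A k ** A"
  by (induction k) (simp_all add: matrix_mul_assoc)

lemma mpow_cscale: "mpow (cscale c A) k = cscale (c ^ k) (mpow A k)"
  by (induction k) (simp_all add: cscale_simps mult.commute)

lemma unitary_intertwiner_conj:
  assumes "unitary_map W" "W ** A = B ** W"
  shows "B = W ** A ** cadj W"
proof -
  have "W ** A ** cadj W = B ** (W ** cadj W)" using assms(2) by (simp add: matrix_mul_assoc)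
  thus ?thesis using assms(1) by (simp add: unitary_map_def)
qed

lemma unitary_conj_mult:
  assumes "unitary_map W"
  shows "(W ** A ** cadj W) ** (W ** B ** cadj W) = W ** (A ** B) ** cadj W"
proof -
  have "(W ** A ** cadj W) ** (W ** B ** cadj W) = W ** A ** (cadj W ** W) ** B ** cadj W"
    by (simp add: matrix_mul_assoc)
  also have "\<dots> = W ** (A ** B) ** cadj W"
    using assms by (simp add: unitary_map_def matrix_mul_assoc)
  finally show ?thesis .
qed

lemma mpow_unitary_conj:
  assumes "unitary_map W"
  shows "mpow (W ** A ** cadj W) k = W ** mpow A k ** cadj W"
  by (induction k) (use assms in \<open>simp_all add: unitary_map_def unitary_conj_mult\<close>)

lemma unitary_cscale: "cmod s = 1 \<Longrightarrow> unitary_map A \<Longrightarrow> unitary_map (cscale s A)"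
  by (simp add: unitary_map_def cadj_cscale cscale_simps unimodular_cnj_mult unimodular_mult_cnj)

lemma unitary_conj:
  assumes "unitary_map W" "unitary_map A"
  shows "unitary_map (W ** A ** cadj W)"
  using assms unitary_conj_mult[OF assms(1), of A "cadj A"] unitary_conj_mult[OF assms(1), of "cadj A" A]
  by (simp add: unitary_map_def cadj_mult cadj_cadj matrix_mul_assoc)

lemma matrix_inv_unitary:
  assumes "unitary_map A"
  shows "matrix_inv A = cadj A"
proof -
  have inv: "A ** matrix_inv A = mat 1 \<and> matrix_inv A ** A = mat 1"
    using assms unfolding matrix_inv_def unitary_map_def by (rule someI[of _ "cadj A"])
  have "matrix_inv A = matrix_inv A ** (A ** cadj A)"
    using assms by (simp add: unitary_map_def)
  also have "\<dots> = cadj A" using inv by (simp add: matrix_mul_assoc)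
  finally show ?thesis .
qed

lemma mpow_int_unitary_conj_cscale:
  assumes "unitary_map W" "unitary_map A" "cmod s = 1"
  shows "mpow_int (W ** cscale s A ** cadj W) k = cscale (s powi k) (W ** mpow_int A k ** cadj W)"
proof -
  have sA: "unitary_map (cscale s A)" by (rule unitary_cscale[OF assms(3,2)])
  have "cnj s = inverse s" using divide_conv_cnj[OF assms(3), of 1] by (simp add: inverse_eq_divide)
  hence "matrix_inv (W ** cscale s A ** cadj W) = W ** cscale (inverse s) (matrix_inv A) ** cadj W"
    using matrix_inv_unitary[OF unitary_conj[OF assms(1) sA]] matrix_inv_unitary[OF assms(2)]
    by (simp add: cadj_mult cadj_cadj cadj_cscale matrix_mul_assoc)
  thus ?thesis
    by (simp add: mpow_int_def mpow_unitary_conj[OF assms(1)] mpow_cscale cscale_simps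
        power_int_def)
qed

section \<open>The standard inner product and orthonormal bases\<close>

definition cinner :: "complex^'n \<Rightarrow> complex^'n \<Rightarrow> complex" where
  "cinner x y = (\<Sum>i\<in>UNIV. cnj (x $ i) * y $ i)"

lemma cinner_adj: "cinner (A *v x) y = cinner x (cadj A *v y)"
proof -
  have "cinner (A *v x) y = (\<Sum>i\<in>UNIV. \<Sum>j\<in>UNIV. cnj (A$i$j) * cnj (x$j) * y$i)"
    by (simp add: cinner_def matrix_vector_mult_def sum_distrib_right)
  also have "\<dots> = (\<Sum>j\<in>UNIV. \<Sum>i\<in>UNIV. cnj (A$i$j) * cnj (x$j) * y$i)"
    by (rule sum.swap)
  also have "\<dots> = cinner x (cadj A *v y)"
    by (simp add: cinner_def matrix_vector_mult_def cadj_def sum_distrib_left algebra_simps)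
  finally show ?thesis .
qed

lemma cinner_scale_right: "cinner x (c *s y) = c * cinner x y"
  by (simp add: cinner_def sum_distrib_left algebra_simps)

lemma cinner_scale_left: "cinner (c *s x) y = cnj c * cinner x y"
  by (simp add: cinner_def sum_distrib_left algebra_simps)

lemma cinner_sum_right: "finite S \<Longrightarrow> cinner x (\<Sum>j\<in>S. f j) = (\<Sum>j\<in>S. cinner x (f j))"
  by (induction S rule: finite_induct) (auto simp: cinner_def sum.distrib algebra_simps)

lemma cinner_commute: "cinner y x = cnj (cinner x y)"
  by (simp add: cinner_def mult.commute)

lemma cinner_self: "cinner x x = complex_of_real ((norm x)\<^sup>2)"
proof -
  have "cinner x x = (\<Sum>i\<in>UNIV. complex_of_real ((norm (x$i))\<^sup>2))"
    unfolding cinner_def by (rule sum.cong) (simp, subst complex_norm_square, rule mult.commute)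
  also have "\<dots> = complex_of_real ((norm x)\<^sup>2)"
    by (simp add: norm_vec_def L2_set_def sum_nonneg)
  finally show ?thesis .
qed

lemma cinner_unitary: "unitary_map U \<Longrightarrow> cinner (U *v x) (U *v y) = cinner x y"
  by (simp add: cinner_adj unitary_map_def matrix_vector_mul_assoc)

lemma cinner_mpow_unitary: "unitary_map V \<Longrightarrow> cinner (mpow V j *v x) (mpow V j *v y) = cinner x y"
  by (induction j) (simp_all add: matrix_vector_mul_assoc[symmetric] cinner_unitary)

lemma isometry_eigenvalue_unimodular:
  assumes "cinner (A *v x) (A *v x) = cinner x x" "A *v x = c *s x" "x \<noteq> 0"
  shows "cmod c = 1"
proof -
  have "(cnj c * c) * cinner x x = 1 * cinner x x"
    using assms(1,2) by (simp add: cinner_scale_left cinner_scale_right mult_ac)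
  moreover have "cinner x x \<noteq> 0" using assms(3) by (simp add: cinner_self)
  ultimately have "c * cnj c = 1" by (simp add: mult.commute)
  hence "(cmod c)\<^sup>2 = 1" by (metis complex_norm_square of_real_eq_1_iff)
  thus ?thesis using norm_ge_zero[of c] by (auto simp: power2_eq_1_iff)
qed

text \<open>Bases are indexed by \<open>{..<r}\<close> so that the shift basis \<open>V^j x\<close> fits directly.\<close>
definition onb :: "nat \<Rightarrow> (nat \<Rightarrow> complex^'n) \<Rightarrow> bool" where
  "onb r e \<longleftrightarrow> (\<forall>i<r. \<forall>j<r. cinner (e i) (e j) = (if i = j then 1 else 0)) \<and>
     (\<forall>y. \<exists>c. y = (\<Sum>j<r. c j *s e j))"

lemma onb_coeff:
  assumes "onb r e" "j < r"
  shows "cinner (e j) (\<Sum>k<r. c k *s e k) = c j"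
proof -
  have "cinner (e j) (\<Sum>k<r. c k *s e k) = (\<Sum>k<r. c k * cinner (e j) (e k))"
    by (simp add: cinner_sum_right cinner_scale_right)
  also have "\<dots> = (\<Sum>k<r. if k = j then c k else 0)"
    by (rule sum.cong) (use assms in \<open>auto simp: onb_def\<close>)
  finally show ?thesis using assms(2) by simp
qed

lemma onb_expand:
  assumes "onb r e"
  shows "y = (\<Sum>j<r. cinner (e j) y *s e j)"
proof -
  obtain c where c: "y = (\<Sum>j<r. c j *s e j)" using assms unfolding onb_def by blast
  show ?thesis
    by (subst (2) c, subst c, rule sum.cong) (auto simp: onb_coeff[OF assms])
qed

lemma onb_matrix_eqI:
  assumes "onb r e" "\<And>j. j < r \<Longrightarrow> (A::complex^'n^'m) *v e j = B *v e j"
  shows "A = B"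
proof (subst matrix_eq, rule allI)
  fix y
  have "A *v y = (\<Sum>j<r. cinner (e j) y *s (A *v e j))"
    by (subst onb_expand[OF assms(1)]) (simp add: matrix_vector_mult_sum vector_scalar_commute)
  also have "\<dots> = (\<Sum>j<r. cinner (e j) y *s (B *v e j))" using assms(2) by simp
  also have "\<dots> = B *v y"
    by (subst (2) onb_expand[OF assms(1)]) (simp add: matrix_vector_mult_sum vector_scalar_commute)
  finally show "A *v y = B *v y" .
qed

lemma onb_scale:
  assumes "onb r e" "\<And>j. cmod (c j) = 1"
  shows "onb r (\<lambda>j. c j *s e j)"
  unfolding onb_def
proof (intro conjI allI impI)
  fix i j assume "i < r" "j < r"
  thus "cinner (c i *s e i) (c j *s e j) = (if i = j then 1 else 0)"
    using assms unimodular_cnj_mult[of "c j"] unimodular_mult_cnj[of "c j"]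
    by (simp add: cinner_scale_left cinner_scale_right onb_def mult.assoc)
next
  fix y
  obtain a where "y = (\<Sum>j<r. a j *s e j)" using assms(1) unfolding onb_def by blast
  moreover have "c j \<noteq> 0" for j using assms(2)[of j] by auto
  ultimately have "y = (\<Sum>j<r. (a j / c j) *s (c j *s e j))" by (simp add: vector_smult_assoc)
  thus "\<exists>a. y = (\<Sum>j<r. a j *s (c j *s e j))" by (rule exI[of _ "\<lambda>j. a j / c j"])
qed

text \<open>The matrix \<open>\<Sum>j. f j e j\<^sup>*\<close>; it maps the orthonormal basis \<open>e\<close> to \<open>f\<close>.\<close>
definition outer :: "nat \<Rightarrow> (nat \<Rightarrow> complex^'m) \<Rightarrow> (nat \<Rightarrow> complex^'n) \<Rightarrow> complex^'n^'m" where
  "outer r f e = (\<chi> a c. \<Sum>j<r. f j $ a * cnj (e j $ c))"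

lemma outer_mult_vec: "outer r f e *v y = (\<Sum>j<r. cinner (e j) y *s f j)"
proof -
  have "(outer r f e *v y) $ a = (\<Sum>j<r. \<Sum>c\<in>UNIV. f j $ a * cnj (e j $ c) * y $ c)" for a
    by (simp add: outer_def matrix_vector_mult_def sum_distrib_right sum.swap[of _ UNIV])
  thus ?thesis
    by (simp add: cvec_eq_iff sum_component cinner_def sum_distrib_right sum_distrib_left
        algebra_simps)
qed

lemma cadj_outer: "cadj (outer r f e) = outer r e f"
  by (simp add: cadj_def outer_def cvec_eq_iff mult.commute)

lemma outer_mult_basis:
  assumes "onb r e" "k < r"
  shows "outer r f e *v e k = f k"
proof -
  have "outer r f e *v e k = (\<Sum>j<r. (if j = k then f j else 0))"
    unfolding outer_mult_vec by (rule sum.cong) (use assms in \<open>auto simp: onb_def\<close>)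
  thus ?thesis using assms by simp
qed

lemma unitary_outer:
  assumes "onb r e" "onb r f"
  shows "unitary_map (outer r f e)"
  unfolding unitary_map_def
proof
  show "outer r f e ** cadj (outer r f e) = mat 1"
    by (rule onb_matrix_eqI[OF assms(2)])
       (simp add: cadj_outer matrix_vector_mul_assoc[symmetric] outer_mult_basis assms)
  show "cadj (outer r f e) ** outer r f e = mat 1"
    by (rule onb_matrix_eqI[OF assms(1)])
       (simp add: cadj_outer matrix_vector_mul_assoc[symmetric] outer_mult_basis assms)
qed

section \<open>Irreducible representations at a root of unity\<close>

definition primitive_root_of_unity :: "nat \<Rightarrow> complex \<Rightarrow> bool" where
  "primitive_root_of_unity r \<mu> \<longleftrightarrow> 0 < r \<and> \<mu> ^ r = 1 \<and> (\<forall>k. 0 < k \<and> k < r \<longrightarrow> \<mu> ^ k \<noteq> 1)"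

lemma primitive_root_of_unity_exp_rational:
  fixes q r :: nat
  assumes "r > 0" "coprime q r"
  shows "primitive_root_of_unity r (exp (2 * pi * \<i> * of_real (real q / real r)))"
proof -
  have pow: "exp (2 * pi * \<i> * of_real (real q / real r)) ^ k
      = exp (2 * of_real pi * \<i> * of_nat (k * q) / of_nat r)" for k
    by (simp add: exp_of_nat_mult[symmetric] of_real_divide field_simps)
  have "exp (2 * pi * \<i> * of_real (real q / real r)) ^ k = 1 \<longleftrightarrow> r dvd k" for k
  proof -
    have "exp (2 * pi * \<i> * of_real (real q / real r)) ^ k = 1 \<longleftrightarrow> r dvd k * q"
      unfolding pow by (rule complex_root_unity_eq_1) (use assms(1) in simp)
    also have "\<dots> \<longleftrightarrow> r dvd k"
      using assms(2) by (simp add: coprime_commute coprime_dvd_mult_left_iff)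
    finally show ?thesis .
  qed
  thus ?thesis
    using assms(1) unfolding primitive_root_of_unity_def by (auto dest: dvd_imp_le)
qed

lemma primitive_root_of_unity_cnj:
  "primitive_root_of_unity r \<mu> \<Longrightarrow> primitive_root_of_unity r (cnj \<mu>)"
  unfolding primitive_root_of_unity_def
  by (metis complex_cnj_power complex_cnj_one complex_cnj_cnj)

lemma primitive_root_of_unity_unimodular:
  "primitive_root_of_unity r \<mu> \<Longrightarrow> cmod \<mu> = 1"
  unfolding primitive_root_of_unity_def
  by (metis norm_ge_zero norm_one norm_power power_eq_1_iff zero_less_iff_neq_zero)

lemma unimodular_root:
  assumes "cmod c = 1" "r > 0"
  obtains t where "cmod t = 1" "t ^ r = c"
proof
  have c0: "c \<noteq> 0" using assms by auto
  show "cmod (exp (Ln c / of_nat r)) = 1" using c0 assms by simp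
  have "exp (Ln c / of_nat r) ^ r = exp (of_nat r * (Ln c / of_nat r))"
    by (rule exp_of_nat_mult[symmetric])
  also have "\<dots> = c" using assms(2) c0 by simp
  finally show "exp (Ln c / of_nat r) ^ r = c" .
qed

lemma commutation_mpow_mult_vec:
  assumes "V ** U = cscale \<omega> (U ** V)" "cmod \<omega> = 1"
  shows "U *v (mpow V j *v y) = cnj \<omega> ^ j *s (mpow V j *v (U *v y))"
proof (induction j)
  case (Suc j)
  have "V *v (U *v z) = \<omega> *s (U *v (V *v z))" for z
    by (simp add: matrix_vector_mul_assoc assms(1) cscale_mult_vec)
  hence "U *v (V *v z) = cnj \<omega> *s (V *v (U *v z))" for z
    using unimodular_cnj_mult[OF assms(2)] by (simp add: vector_smult_assoc)
  thus ?case
    by (simp add: Suc matrix_vector_mul_assoc[symmetric] vector_scalar_commute vector_smult_assoc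
        mult.commute)
qed simp

lemma irreducible_rep_invariant_eq_UNIV:
  assumes "irreducible_rep \<theta> U V" "csubspace S" "\<And>x. x \<in> S \<Longrightarrow> U *v x \<in> S \<and> V *v x \<in> S"
    "x \<in> S" "x \<noteq> 0"
  shows "S = UNIV"
  using assms unfolding irreducible_rep_def by blast

lemma irreducible_rep_commutant_scalar:
  assumes irr: "irreducible_rep \<theta> U V" and "C ** U = U ** C" "C ** V = V ** C"
  obtains b where "\<And>y. C *v y = b *s y"
proof -
  obtain b y0 where y0: "y0 \<noteq> 0" "C *v y0 = b *s y0" by (rule matrix_eigenvector_exists)
  define S where "S = {y. C *v y = b *s y}"
  have "csubspace S" unfolding csubspace_def S_def
    by (auto simp: matrix_vector_right_distrib vector_scalar_commute vector_smult_assoc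
        mult.commute vector_add_ldistrib)
  moreover have "U *v x \<in> S \<and> V *v x \<in> S" if "x \<in> S" for x
  proof -
    have "C *v (U *v x) = U *v (C *v x)" "C *v (V *v x) = V *v (C *v x)"
      by (simp_all add: matrix_vector_mul_assoc assms(2,3))
    thus ?thesis using that unfolding S_def by (simp add: vector_scalar_commute)
  qed
  ultimately have "S = UNIV"
    using irreducible_rep_invariant_eq_UNIV[OF irr] y0 unfolding S_def by blast
  thus ?thesis using that unfolding S_def by auto
qed

lemma csubspace_combinations: "csubspace {y. \<exists>c. y = (\<Sum>j<r. c j *s e j)}"
  unfolding csubspace_def
proof (intro conjI ballI allI)
  show "0 \<in> {y. \<exists>c. y = (\<Sum>j<r. c j *s e j)}"
    by (intro CollectI exI[of _ "\<lambda>_. 0"]) simp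
next
  fix y z assume "y \<in> {y. \<exists>c. y = (\<Sum>j<r. c j *s e j)}" "z \<in> {y. \<exists>c. y = (\<Sum>j<r. c j *s e j)}"
  then obtain c d where "y = (\<Sum>j<r. c j *s e j)" "z = (\<Sum>j<r. d j *s e j)" by auto
  thus "y + z \<in> {y. \<exists>c. y = (\<Sum>j<r. c j *s e j)}"
    by (intro CollectI exI[of _ "\<lambda>j. c j + d j"]) (simp add: vector_sadd_rdistrib sum.distrib)
next
  fix a :: complex and y assume "y \<in> {y. \<exists>c. y = (\<Sum>j<r. c j *s e j)}"
  then obtain c where "y = (\<Sum>j<r. c j *s e j)" by auto
  thus "a *s y \<in> {y. \<exists>c. y = (\<Sum>j<r. c j *s e j)}"
    by (intro CollectI exI[of _ "\<lambda>j. a * c j"]) (simp add: vector_smult_sum vector_smult_assoc)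
qed

text \<open>Distinct eigenvalues of the unitary \<open>U\<close> force orthogonality.\<close>
lemma shift_orbit_orthonormal:
  assumes uU: "unitary_map U" and uV: "unitary_map V" and prim: "primitive_root_of_unity r \<mu>"
    and eig: "\<And>j. U *v (mpow V j *v x) = (\<kappa> * \<mu> ^ j) *s (mpow V j *v x)"
    and "cmod \<kappa> = 1" "cinner x x = 1" "i < r" "j < r"
  shows "cinner (mpow V i *v x) (mpow V j *v x) = (if i = j then 1 else 0)"
proof -
  define e where "e j = mpow V j *v x" for j
  have orth: "cinner (e i) (e j) = 0" if "i < j" "j < r" for i j
  proof -
    have "cinner (e i) (e j) = cinner (U *v e i) (U *v e j)"
      by (rule cinner_unitary[OF uU, symmetric])
    also have "\<dots> = (cnj \<kappa> * \<kappa>) * (cnj \<mu> * \<mu>) ^ i * \<mu> ^ (j - i) * cinner (e i) (e j)"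
      using that eig unfolding e_def
      by (simp add: cinner_scale_left cinner_scale_right power_mult_distrib mult_ac
          flip: power_add)
    also have "\<dots> = \<mu> ^ (j - i) * cinner (e i) (e j)"
      using assms(5) primitive_root_of_unity_unimodular[OF prim] by (simp add: unimodular_cnj_mult)
    finally have "(\<mu> ^ (j - i) - 1) * cinner (e i) (e j) = 0" by (simp add: algebra_simps)
    moreover have "\<mu> ^ (j - i) \<noteq> 1" using prim that unfolding primitive_root_of_unity_def by simp
    ultimately show ?thesis by simp
  qed
  consider "i = j" | "i < j" | "j < i" by linarith
  thus ?thesis
    using assms(6-8) orth orth[of j i] cinner_commute[of "e i" "e j"]
    by cases (simp_all add: e_def cinner_mpow_unitary[OF uV])
qed

text \<open>The span of the orbit is invariant: \<open>U\<close> acts diagonally and \<open>V\<close> cyclically, with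
  \<open>V (V^(r-1) x) = b x\<close>.\<close>
lemma shift_orbit_spans:
  assumes irr: "irreducible_rep \<theta> U V" and "r > 0" "x \<noteq> 0"
    and eig: "\<And>j. U *v (mpow V j *v x) = (\<kappa> * \<mu> ^ j) *s (mpow V j *v x)"
    and b: "mpow V r *v x = b *s x"
  shows "\<exists>c. y = (\<Sum>j<r. c j *s (mpow V j *v x))"
proof -
  define e where "e j = mpow V j *v x" for j
  define S where "S = {y. \<exists>c. y = (\<Sum>j<r. c j *s e j)}"
  obtain r' where r': "r = Suc r'" using \<open>r > 0\<close> by (cases r) auto
  have invariant: "U *v y \<in> S \<and> V *v y \<in> S" if "y \<in> S" for y
  proof
    obtain c where c: "y = (\<Sum>j<r. c j *s e j)" using \<open>y \<in> S\<close> unfolding S_def by auto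
    have "U *v y = (\<Sum>j<r. (c j * (\<kappa> * \<mu> ^ j)) *s e j)"
      unfolding c e_def by (simp add: matrix_vector_mult_sum vector_scalar_commute eig vector_smult_assoc)
    thus "U *v y \<in> S" unfolding S_def by (intro CollectI exI)
    have "V *v y = (\<Sum>j<r'. c j *s e (Suc j)) + c r' *s e r"
      unfolding c e_def r'
      by (simp add: matrix_vector_mult_sum matrix_vector_right_distrib vector_scalar_commute
          matrix_vector_mul_assoc)
    also have "\<dots> = (\<Sum>j<r. (if j = 0 then c r' * b else c (j - 1)) *s e j)"
      unfolding r' sum.lessThan_Suc_shift e_def
      by (simp add: r'[symmetric] b vector_smult_assoc mult.commute add.commute)
    finally show "V *v y \<in> S" unfolding S_def by (intro CollectI exI)
  qed
  have "x = (\<Sum>j<r. (if j = 0 then 1 else 0) *s e j)"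
    unfolding r' sum.lessThan_Suc_shift e_def by simp
  hence "x \<in> S" unfolding S_def by (intro CollectI exI)
  have "S = UNIV"
    unfolding S_def
    by (rule irreducible_rep_invariant_eq_UNIV[OF irr csubspace_combinations
          invariant[unfolded S_def] \<open>x \<in> S\<close>[unfolded S_def] \<open>x \<noteq> 0\<close>])
  hence "y \<in> S" by simp
  thus ?thesis unfolding S_def e_def by simp
qed

lemma irreducible_rep_shift_basis:
  assumes irr: "irreducible_rep \<theta> U V"
    and prim: "primitive_root_of_unity r (cnj (exp (2 * pi * \<i> * of_real \<theta>)))"
  obtains x \<kappa> b where "onb r (\<lambda>j. mpow V j *v x)"
    "\<And>j. U *v (mpow V j *v x) = (\<kappa> * cnj (exp (2 * pi * \<i> * of_real \<theta>)) ^ j) *s (mpow V j *v x)"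
    "mpow V r *v x = b *s x" "cmod \<kappa> = 1" "cmod b = 1"
proof -
  define \<omega> where "\<omega> = exp (2 * pi * \<i> * of_real \<theta>)"
  have uU: "unitary_map U" and uV: "unitary_map V" and VU: "V ** U = cscale \<omega> (U ** V)"
    using irr unfolding irreducible_rep_def is_rep_def \<omega>_def by auto
  have \<omega>1: "cmod \<omega> = 1" unfolding \<omega>_def by simp
  have "cnj \<omega> ^ r = 1" using prim unfolding primitive_root_of_unity_def \<omega>_def by simp
  hence "mpow V r ** U = U ** mpow V r"
    using commutation_mpow_mult_vec[OF VU \<omega>1, of r]
    by (simp add: matrix_eq flip: matrix_vector_mul_assoc)
  moreover have "mpow V r ** V = V ** mpow V r" by (metis mpow.simps(2) mpow_Suc_right)
  ultimately obtain b where b: "\<And>y. mpow V r *v y = b *s y"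
    using irreducible_rep_commutant_scalar[OF irr] by blast
  obtain \<kappa> x0 where x0: "x0 \<noteq> 0" "U *v x0 = \<kappa> *s x0" by (rule matrix_eigenvector_exists)
  define x where "x = (1 / complex_of_real (norm x0)) *s x0"
  have Ux: "U *v x = \<kappa> *s x"
    unfolding x_def by (simp add: vector_scalar_commute x0 vector_smult_assoc mult.commute)
  have xx: "cinner x x = 1"
    using x0 unfolding x_def
    by (simp only: cinner_scale_left cinner_scale_right) (simp add: cinner_self power2_eq_square)
  hence "x \<noteq> 0" by (auto simp: cinner_def)
  have \<kappa>1: "cmod \<kappa> = 1" by (rule isometry_eigenvalue_unimodular[OF cinner_unitary[OF uU] Ux \<open>x \<noteq> 0\<close>])
  have b1: "cmod b = 1" by (rule isometry_eigenvalue_unimodular[OF cinner_mpow_unitary[OF uV] b \<open>x \<noteq> 0\<close>])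
  have eig: "U *v (mpow V j *v x) = (\<kappa> * cnj \<omega> ^ j) *s (mpow V j *v x)" for j
    using commutation_mpow_mult_vec[OF VU \<omega>1, of j x]
    by (simp add: Ux vector_scalar_commute vector_smult_assoc mult.commute)
  have "onb r (\<lambda>j. mpow V j *v x)"
    unfolding onb_def
    using shift_orbit_orthonormal[OF uU uV prim[folded \<omega>_def] eig \<kappa>1 xx]
      shift_orbit_spans[OF irr _ \<open>x \<noteq> 0\<close> eig b] prim
    by (simp add: primitive_root_of_unity_def)
  thus ?thesis using that eig b \<kappa>1 b1 unfolding \<omega>_def by blast
qed

text \<open>The unitary \<open>V^j x \<mapsto> t^-j V'^j x'\<close> conjugates \<open>(\<kappa>'/\<kappa> U, t V)\<close> into \<open>(U', V')\<close>:
  in the rescaled basis \<open>f\<close>, \<open>V'\<close> acts as \<open>t\<close> times the shift, and \<open>t^r b = b'\<close> makes its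
  wrap-around \<open>f r = b f 0\<close> match that of the basis \<open>e\<close>.\<close>
lemma shift_bases_unit_equiv:
  assumes onb: "onb r (\<lambda>j. mpow V j *v x)" and onb': "onb r (\<lambda>j. mpow V' j *v x')"
    and eig: "\<And>j. U *v (mpow V j *v x) = (\<kappa> * \<mu> ^ j) *s (mpow V j *v x)"
    and eig': "\<And>j. U' *v (mpow V' j *v x') = (\<kappa>' * \<mu> ^ j) *s (mpow V' j *v x')"
    and b: "mpow V r *v x = b *s x" and b': "mpow V' r *v x' = b' *s x'"
    and "r > 0" "\<kappa> \<noteq> 0" "cmod t = 1" "t ^ r * b = b'"
  shows "unit_equiv (cscale (\<kappa>' / \<kappa>) U) (cscale t V) U' V'"
proof -
  define e where "e j = mpow V j *v x" for j
  define f where "f j = inverse t ^ j *s (mpow V' j *v x')" for j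
  define W where "W = outer r f e"
  have "onb r e" using onb unfolding e_def .
  moreover have "onb r f"
    unfolding f_def by (rule onb_scale[OF onb']) (simp add: norm_power norm_inverse \<open>cmod t = 1\<close>)
  ultimately have uW: "unitary_map W" unfolding W_def by (rule unitary_outer)
  have t0: "t \<noteq> 0" using \<open>cmod t = 1\<close> by auto
  have "f r = b *s f 0"
    using b' \<open>t ^ r * b = b'\<close> t0 by (simp add: f_def vector_smult_assoc power_inverse field_simps)
  hence We: "W *v e k = f k" if "k \<le> r" for k
    using that outer_mult_basis[OF \<open>onb r e\<close>, of k f] outer_mult_basis[OF \<open>onb r e\<close> \<open>r > 0\<close>, of f] b
    by (cases "k = r") (simp_all add: W_def e_def vector_scalar_commute)
  have "W ** cscale (\<kappa>' / \<kappa>) U = U' ** W"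
  proof (rule onb_matrix_eqI[OF \<open>onb r e\<close>])
    fix k assume "k < r"
    thus "(W ** cscale (\<kappa>' / \<kappa>) U) *v e k = (U' ** W) *v e k"
      using \<open>\<kappa> \<noteq> 0\<close>
      by (simp add: e_def f_def We[unfolded e_def] eig eig' cscale_mult_vec vector_scalar_commute
          vector_smult_assoc mult.commute flip: matrix_vector_mul_assoc)
  qed
  moreover have "W ** cscale t V = V' ** W"
  proof (rule onb_matrix_eqI[OF \<open>onb r e\<close>])
    fix k assume "k < r"
    have "(W ** cscale t V) *v e k = t *s (W *v e (Suc k))"
      by (simp add: e_def cscale_mult_vec vector_scalar_commute flip: matrix_vector_mul_assoc)
    also have "\<dots> = t *s f (Suc k)" using We \<open>k < r\<close> by simp
    also have "\<dots> = V' *v f k"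
      using t0 by (simp add: f_def vector_scalar_commute vector_smult_assoc matrix_vector_mul_assoc)
    also have "\<dots> = (V' ** W) *v e k" using We \<open>k < r\<close> by (simp flip: matrix_vector_mul_assoc)
    finally show "(W ** cscale t V) *v e k = (V' ** W) *v e k" .
  qed
  ultimately show ?thesis
    unfolding unit_equiv_def using uW unitary_intertwiner_conj by blast
qed

lemma irreducible_rep_twist_equiv:
  assumes prim: "primitive_root_of_unity r (cnj (exp (2 * pi * \<i> * of_real \<theta>)))"
    and irr: "irreducible_rep \<theta> U V" and irr': "irreducible_rep \<theta> U' V'"
  obtains s t where "cmod s = 1" "cmod t = 1" "unit_equiv (cscale s U) (cscale t V) U' V'"
proof -
  obtain x \<kappa> b where basis: "onb r (\<lambda>j. mpow V j *v x)"
    and eig: "\<And>j. U *v (mpow V j *v x) = (\<kappa> * cnj (exp (2 * pi * \<i> * of_real \<theta>)) ^ j) *s (mpow V j *v x)"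
    and b: "mpow V r *v x = b *s x" and "cmod \<kappa> = 1" "cmod b = 1"
    using irreducible_rep_shift_basis[OF irr prim] by blast
  obtain x' \<kappa>' b' where basis': "onb r (\<lambda>j. mpow V' j *v x')"
    and eig': "\<And>j. U' *v (mpow V' j *v x') = (\<kappa>' * cnj (exp (2 * pi * \<i> * of_real \<theta>)) ^ j) *s (mpow V' j *v x')"
    and b': "mpow V' r *v x' = b' *s x'" and "cmod \<kappa>' = 1" "cmod b' = 1"
    using irreducible_rep_shift_basis[OF irr' prim] by blast
  have "r > 0" using prim unfolding primitive_root_of_unity_def by simp
  obtain t where t: "cmod t = 1" "t ^ r = b' / b"
    using unimodular_root[of "b' / b" r] \<open>r > 0\<close> \<open>cmod b = 1\<close> \<open>cmod b' = 1\<close>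
    by (auto simp: norm_divide)
  have "t ^ r * b = b'" using t \<open>cmod b = 1\<close> by auto
  moreover have "\<kappa> \<noteq> 0" "cmod (\<kappa>' / \<kappa>) = 1" using \<open>cmod \<kappa> = 1\<close> \<open>cmod \<kappa>' = 1\<close> by (auto simp: norm_divide)
  ultimately show ?thesis
    using that shift_bases_unit_equiv[OF basis basis' eig eig' b b' \<open>r > 0\<close>] t(1) by blast
qed

section \<open>The bundles \<open>\<E>\<^sub>\<pi>\<close>\<close>

definition automorphy_scalar :: "real \<Rightarrow> complex \<Rightarrow> int \<Rightarrow> int \<Rightarrow> complex \<Rightarrow> complex" where
  "automorphy_scalar \<theta> \<tau> n m z =
     (let \<gamma> = of_int n + \<tau> * of_int m; \<alpha> = pi * \<theta> / Im \<tau> in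
      exp (of_real \<alpha> * (z * cnj \<gamma> + of_real ((cmod \<gamma>)\<^sup>2 / 2)))
        * exp (of_real (pi * \<theta>) * \<i> * of_int n * of_int m))"

lemma Jfac_eq_cscale:
  "Jfac \<theta> \<tau> A B n m z = cscale (automorphy_scalar \<theta> \<tau> n m z) (mpow_int A (- n) ** mpow_int B (- m))"
  unfolding Jfac_def automorphy_scalar_def Let_def by simp

lemma unimodular_gauge:
  assumes "Im \<tau> \<noteq> 0" "cmod s = 1" "cmod t = 1"
  obtains \<phi> :: "complex \<Rightarrow> complex" where "continuous_on UNIV \<phi>" "\<And>z. \<phi> z \<noteq> 0"
    "\<And>z n m. \<phi> (z + of_int n + \<tau> * of_int m) = s powi (- n) * t powi (- m) * \<phi> z"
proof
  define a where "a = Arg s"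
  define c where "c = Arg t"
  define Y where "Y z = Im z / Im \<tau>" for z
  define X where "X z = Re z - Re \<tau> * Y z" for z
  define \<phi> where "\<phi> z = exp (- \<i> * of_real (a * X z + c * Y z))" for z
  show "continuous_on UNIV \<phi>"
    unfolding \<phi>_def X_def Y_def by (intro continuous_intros) (simp_all add: assms(1))
  show "\<phi> z \<noteq> 0" for z unfolding \<phi>_def by simp
  fix z n m
  have "X (z + of_int n + \<tau> * of_int m) = X z + of_int n"
    "Y (z + of_int n + \<tau> * of_int m) = Y z + of_int m"
    unfolding X_def Y_def using assms(1) by (simp_all add: field_simps)
  hence "\<phi> (z + of_int n + \<tau> * of_int m)
      = exp (of_int (- n) * (\<i> * of_real a) + of_int (- m) * (\<i> * of_real c)) * \<phi> z"
    unfolding \<phi>_def by (simp add: exp_add[symmetric] algebra_simps)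
  also have "\<dots> = s powi (- n) * t powi (- m) * \<phi> z"
  proof -
    have polar: "s = exp (\<i> * of_real a)" "t = exp (\<i> * of_real c)"
      using assms(2,3) complex_norm_eq_1_exp_eq unfolding a_def c_def by auto
    show ?thesis by (simp only: polar exp_add exp_power_int)
  qed
  finally show "\<phi> (z + of_int n + \<tau> * of_int m) = s powi (- n) * t powi (- m) * \<phi> z" .
qed

lemma bundle_iso_twist:
  fixes U V :: "complex^'m^'m" and U' V' :: "complex^'k^'k"
  assumes "Im \<tau> \<noteq> 0" "cmod s = 1" "cmod t = 1" "unitary_map U" "unitary_map V"
    and "unit_equiv (cscale s U) (cscale t V) U' V'"
  shows "bundle_iso \<theta> \<tau> U V U' V'"
proof -
  obtain W :: "complex^'m^'k" where uW: "unitary_map W"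
    and U': "U' = W ** cscale s U ** cadj W" and V': "V' = W ** cscale t V ** cadj W"
    using assms(6) unfolding unit_equiv_def by blast
  obtain \<phi> where cont: "continuous_on UNIV \<phi>" and \<phi>0: "\<And>z. \<phi> z \<noteq> 0"
    and shift: "\<And>z n m. \<phi> (z + of_int n + \<tau> * of_int m) = s powi (- n) * t powi (- m) * \<phi> z"
    using unimodular_gauge[OF assms(1-3)] by blast
  define \<Phi> where "\<Phi> z = cscale (\<phi> z) W" for z
  have "continuous_on UNIV \<Phi>"
    unfolding \<Phi>_def cscale_def by (intro continuous_on_vec_lambda continuous_on_mult_right cont)
  moreover have "invertible (\<Phi> z)" for z
    using uW \<phi>0[of z] unfolding invertible_def unitary_map_def \<Phi>_def
    by (intro exI[of _ "cscale (inverse (\<phi> z)) (cadj W)"]) (simp add: cscale_simps)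
  moreover have "\<Phi> (z + of_int n + \<tau> * of_int m) ** Jfac \<theta> \<tau> U V n m z
      = Jfac \<theta> \<tau> U' V' n m z ** \<Phi> z" for n m z
  proof -
    have WW: "A ** cadj W ** W = A" for A :: "complex^'m^'k"
      using uW unfolding unitary_map_def by (metis matrix_mul_assoc matrix_mul_rid)
    show ?thesis
      unfolding Jfac_eq_cscale \<Phi>_def shift U' V'
      using mpow_int_unitary_conj_cscale[OF uW assms(4,2)] mpow_int_unitary_conj_cscale[OF uW assms(5,3)]
      by (simp add: cscale_simps mult_ac matrix_mul_assoc WW)
  qed
  ultimately show ?thesis unfolding bundle_iso_def by blast
qed

theorem corollary3p1:
  fixes q r :: nat and \<theta> :: real and \<tau> :: complex
    and U V :: "complex^'n^'n"
    and U1 V1 :: "complex^'m^'m"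
    and U2 V2 :: "complex^'k^'k"
  assumes "Im \<tau> > 0"
    and "q > 0" and "r > 0" and "coprime q r" and "\<theta> = real q / real r"
    and "irreducible_rep \<theta> U V"
    and "irreducible_rep \<theta> U1 V1"
    and "irreducible_rep \<theta> U2 V2"
  shows "(\<exists>s t. cmod s = 1 \<and> cmod t = 1 \<and> unit_equiv (cscale s U) (cscale t V) U1 V1)
         \<and> bundle_iso \<theta> \<tau> U1 V1 U2 V2"
proof
  have prim: "primitive_root_of_unity r (cnj (exp (2 * pi * \<i> * of_real \<theta>)))"
    using primitive_root_of_unity_cnj[OF primitive_root_of_unity_exp_rational[OF assms(3,4)]]
    by (simp add: assms(5))
  show "\<exists>s t. cmod s = 1 \<and> cmod t = 1 \<and> unit_equiv (cscale s U) (cscale t V) U1 V1"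
    by (rule irreducible_rep_twist_equiv[OF prim assms(6,7)]) blast
  obtain s t where st: "cmod s = 1" "cmod t = 1" "unit_equiv (cscale s U1) (cscale t V1) U2 V2"
    by (rule irreducible_rep_twist_equiv[OF prim assms(7,8)])
  have "Im \<tau> \<noteq> 0" using assms(1) by simp
  moreover have "unitary_map U1" "unitary_map V1"
    using assms(7) unfolding irreducible_rep_def is_rep_def by auto
  ultimately show "bundle_iso \<theta> \<tau> U1 V1 U2 V2"
    using bundle_iso_twist st by blast
qed

end
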